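(* Let $n\ge 1$, $d\ge 1$, let $k$ be an integer with $1\le k\le n$, let $\theta\in[0,1]$, let $\boldsymbol c\in\mathbb{R}^n$, and let $\boldsymbol E\in\mathbb{R}^{n\times d}$ have rows $\boldsymbol e_1,\dots,\boldsymbol e_n$ with $\|\boldsymbol e_i\|_2=1$ for all $i$. For $\lambda\in\mathbb{R}$ define $$f(\boldsymbol x)=\theta\,(k-1)\,\boldsymbol c^{\mathsf T}\boldsymbol x+(1-\theta)\,\boldsymbol x^{\mathsf T}(\lambda \boldsymbol I-\boldsymbol E\boldsymbol E^{\mathsf T})\boldsymbol x .$$ If $\lambda\ge 2$, then $$\max\{f(\boldsymbol x): \boldsymbol x\in\{0,1\}^n,\ \boldsymbol 1^{\mathsf T}\boldsymbol x=k\}=\max\{f(\boldsymbol x): \boldsymbol x\in[0,1]^n,\ \boldsymbol 1^{\mathsf T}\boldsymbol x=k\},$$ i.e. the relaxed problem has an integral (0/1) global maximizer, and every global maximizer of the binary problem is a global maximizer of the relaxed problem. Moreover, for every feasible $\boldsymbol x\in[0,1]^n$ with $\boldsymbol 1^{\mathsf T}\boldsymbol x=k$ there is an integral feasible $\boldsymbol x^\ast\in\{0,1\}^n$ with $\boldsymbol 1^{\mathsf T}\boldsymbol x^\ast=k$ and $f(\boldsymbol x^\ast)\ge f(\boldsymbol x)$.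
   Context: The binary problem is the cardinality-constrained binary quadratic program $\max f(\boldsymbol x)$ over $\boldsymbol x\in\{0,1\}^n$ with $\boldsymbol 1^{\mathsf T}\boldsymbol x=k$; the relaxed problem replaces $\{0,1\}^n$ by $[0,1]^n$. The relaxation is called tight if the two global maximum values coincide. Note that the diagonal entries of $\boldsymbol W=\boldsymbol E\boldsymbol E^{\mathsf T}$ equal $1$ and its off-diagonal entries $w_{ij}=\boldsymbol e_i^{\mathsf T}\boldsymbol e_j$ lie in $[-1,1]$. *)

theory Defs
  imports "HOL-Analysis.Analysis"
begin

definition obj :: "real \<Rightarrow> nat \<Rightarrow> real \<Rightarrow> real^'n \<Rightarrow> real^'d^'n \<Rightarrow> real^'n \<Rightarrow> real" where
  "obj \<theta> k lam c E x =
     \<theta> * (real k - 1) * (c \<bullet> x)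
     + (1 - \<theta>) * (x \<bullet> ((lam *\<^sub>R mat 1 - E ** transpose E) *v x))"

definition binfeas :: "nat \<Rightarrow> (real^'n) set" where
  "binfeas k = {x. (\<forall>i. x $ i = 0 \<or> x $ i = 1) \<and> (\<Sum>i\<in>UNIV. x $ i) = real k}"

definition relfeas :: "nat \<Rightarrow> (real^'n) set" where
  "relfeas k = {x. (\<forall>i. 0 \<le> x $ i \<and> x $ i \<le> 1) \<and> (\<Sum>i\<in>UNIV. x $ i) = real k}"

end

theory Submission
  imports Defs
begin

(* Write u_i for the standard basis vectors and e_i for the rows of E. Along an exchange
   direction u_i - u_j the objective is a quadratic polynomial in the step length with leading
   coefficient (1 - theta) (2 lam - |e_i - e_j|^2), and |e_i - e_j| <= 2 makes it nonnegative
   once lam >= 2; so f is convex on every such line. A relaxed feasible point with a fractional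
   coordinate has a second one, since the coordinates sum to an integer. Moving along u_i - u_j
   in either direction until a coordinate hits 0 or 1 stays feasible and shrinks the set of
   fractional coordinates, and by convexity one of the two endpoints does not decrease f.
   Induction on the number of fractional coordinates yields a binary point at least as good. *)

lemma convex_on_real_quadratic:
  fixes a b c :: real
  assumes "0 \<le> c"
  shows "convex_on UNIV (\<lambda>t. a + b * t + c * t\<^sup>2)"
proof (rule convex_onI)
  fix s u v :: real
  assume "0 < s" "s < 1"
  then have "0 \<le> c * s * (1 - s) * (u - v)\<^sup>2"
    using assms by simp
  moreover have "(1 - s) * (a + b * u + c * u\<^sup>2) + s * (a + b * v + c * v\<^sup>2)
      - (a + b * ((1 - s) * u + s * v) + c * ((1 - s) * u + s * v)\<^sup>2)
      = c * s * (1 - s) * (u - v)\<^sup>2"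
    by (simp add: power2_eq_square algebra_simps)
  ultimately show "a + b * ((1 - s) *\<^sub>R u + s *\<^sub>R v) + c * ((1 - s) *\<^sub>R u + s *\<^sub>R v)\<^sup>2
      \<le> (1 - s) * (a + b * u + c * u\<^sup>2) + s * (a + b * v + c * v\<^sup>2)"
    by simp
qed simp

lemma power2_norm_add_scaleR:
  fixes x y :: "'a::real_inner"
  shows "(norm (x + t *\<^sub>R y))\<^sup>2 = (norm x)\<^sup>2 + 2 * t * (x \<bullet> y) + t\<^sup>2 * (norm y)\<^sup>2"
  unfolding power2_norm_eq_inner
  by (simp add: inner_commute power2_eq_square algebra_simps)

lemma inner_scaled_identity_minus_gram:
  fixes E :: "real^'d^'n"
  shows "x \<bullet> ((lam *\<^sub>R mat 1 - E ** transpose E) *v x)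
    = lam * (norm x)\<^sup>2 - (norm (transpose E *v x))\<^sup>2"
proof -
  have "x \<bullet> ((lam *\<^sub>R mat 1 - E ** transpose E) *v x)
      = x \<bullet> (lam *\<^sub>R x) - x \<bullet> (E *v (transpose E *v x))"
    by (simp only: matrix_vector_mult_diff_rdistrib matrix_vector_mul_assoc inner_diff_right
        flip: scaleR_matrix_vector_assoc) simp
  also have "x \<bullet> (E *v (transpose E *v x)) = (transpose E *v x) \<bullet> (transpose E *v x)"
    by (simp only: flip: dot_lmul_matrix) (simp add: inner_commute)
  finally show ?thesis
    by (simp add: power2_norm_eq_inner del: transpose_matrix_vector)
qed

lemma transpose_mult_axis_diff:
  fixes E :: "real^'d^'n"
  shows "transpose E *v (axis i 1 - axis j 1) = E $ i - E $ j"
  by (simp only: vec.diff matrix_vector_mult_basis column_transpose) (simp add: row_def)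

lemma obj_convex_on_exchange_line:
  fixes E :: "real^'d^'n"
  assumes rows: "\<And>i. norm (E $ i) = 1" and "lam \<ge> 2" and "\<theta> \<le> 1" and "i \<noteq> j"
  shows "convex_on UNIV (\<lambda>t. obj \<theta> k lam c E (x + t *\<^sub>R (axis i 1 - axis j 1)))"
proof -
  define d :: "real^'n" where "d = axis i 1 - axis j 1"
  define y where "y = transpose E *v x"
  define w where "w = E $ i - E $ j"
  have "(norm d)\<^sup>2 = 2"
    using \<open>i \<noteq> j\<close>
    by (simp add: d_def power2_norm_eq_inner inner_diff_left inner_diff_right inner_axis_axis)
  moreover have "norm w \<le> 2"
    using norm_triangle_ineq4[of "E $ i" "E $ j"] rows by (simp add: w_def)
  then have "(norm w)\<^sup>2 \<le> 2\<^sup>2"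
    by (rule power_mono) simp
  ultimately have curvature: "0 \<le> (1 - \<theta>) * (lam * (norm d)\<^sup>2 - (norm w)\<^sup>2)"
    using \<open>lam \<ge> 2\<close> \<open>\<theta> \<le> 1\<close> by simp
  have "obj \<theta> k lam c E (x + t *\<^sub>R d)
      = (\<theta> * (real k - 1) * (c \<bullet> x) + (1 - \<theta>) * (lam * (norm x)\<^sup>2 - (norm y)\<^sup>2))
        + (\<theta> * (real k - 1) * (c \<bullet> d) + 2 * (1 - \<theta>) * (lam * (x \<bullet> d) - y \<bullet> w)) * t
        + (1 - \<theta>) * (lam * (norm d)\<^sup>2 - (norm w)\<^sup>2) * t\<^sup>2" for t
  proof -
    have "transpose E *v (x + t *\<^sub>R d) = y + t *\<^sub>R w"
      by (simp only: y_def w_def d_def matrix_vector_right_distrib matrix_vector_mult_scaleR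
          transpose_mult_axis_diff)
    then show ?thesis
      unfolding obj_def inner_scaled_identity_minus_gram
      by (simp add: power2_norm_add_scaleR algebra_simps del: transpose_matrix_vector)
  qed
  then show ?thesis
    using convex_on_real_quadratic[OF curvature] by (simp add: d_def)
qed

lemma convex_on_line_le_max:
  fixes f :: "'a::real_vector \<Rightarrow> real"
  assumes "convex_on UNIV (\<lambda>t. f (x + t *\<^sub>R d))" and "a \<le> 0" and "0 \<le> b"
  shows "f x \<le> max (f (x + a *\<^sub>R d)) (f (x + b *\<^sub>R d))"
proof -
  have "convex_on {a..b} (\<lambda>t. f (x + t *\<^sub>R d))"
    using assms(1) by (rule convex_on_subset) auto
  then have "f (x + 0 *\<^sub>R d) \<le> max (f (x + a *\<^sub>R d)) (f (x + b *\<^sub>R d))"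
    using assms(2,3) by (intro convex_on_le_max) auto
  then show ?thesis
    by simp
qed

definition fractional_coords :: "real^'n \<Rightarrow> 'n set" where
  "fractional_coords x = {i. 0 < x $ i \<and> x $ i < 1}"

lemma binfeas_iff_relfeas_no_fractional_coords:
  "x \<in> binfeas k \<longleftrightarrow> x \<in> relfeas k \<and> fractional_coords x = {}"
proof -
  have "r = 0 \<or> r = 1 \<longleftrightarrow> 0 \<le> r \<and> r \<le> 1 \<and> \<not> (0 < r \<and> r < 1)" for r :: real
    by auto
  then show ?thesis
    unfolding binfeas_def relfeas_def fractional_coords_def by blast
qed

lemma relfeas_fractional_coord_partner:
  assumes "x \<in> relfeas k" and "i \<in> fractional_coords x"
  obtains j where "j \<in> fractional_coords x" and "j \<noteq> i"
proof (rule ccontr)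
  assume "\<not> thesis"
  with that have no_partner: "j \<notin> fractional_coords x" if "j \<noteq> i" for j
    using \<open>j \<noteq> i\<close> by blast
  have "x $ j \<in> \<int>" if "j \<noteq> i" for j
  proof -
    have "x $ j = 0 \<or> x $ j = 1"
      using no_partner[OF that] \<open>x \<in> relfeas k\<close>
      by (auto simp: relfeas_def fractional_coords_def less_le)
    then show ?thesis
      by auto
  qed
  then have "(\<Sum>j\<in>UNIV - {i}. x $ j) \<in> \<int>"
    by (intro Ints_sum) auto
  moreover have "real k = x $ i + (\<Sum>j\<in>UNIV - {i}. x $ j)"
    using \<open>x \<in> relfeas k\<close> by (simp add: relfeas_def flip: sum.remove)
  ultimately have "x $ i \<in> \<int>"
    by (metis Ints_diff Ints_of_nat add_diff_cancel_right')
  with \<open>i \<in> fractional_coords x\<close> show False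
    by (auto simp: fractional_coords_def elim!: Ints_cases)
qed

lemma relfeas_exchange:
  assumes "x \<in> relfeas k" and i: "i \<in> fractional_coords x" and j: "j \<in> fractional_coords x"
    and "i \<noteq> j"
  defines "t \<equiv> min (1 - x $ i) (x $ j)"
  defines "x' \<equiv> x + t *\<^sub>R (axis i 1 - axis j 1)"
  shows "0 < t" and "x' \<in> relfeas k" and "fractional_coords x' \<subset> fractional_coords x"
proof -
  have coord: "x' $ m = x $ m + (if m = i then t else 0) - (if m = j then t else 0)" for m
    by (simp add: x'_def axis_def)
  show "0 < t"
    using i j by (simp add: t_def fractional_coords_def)
  have "(\<Sum>m\<in>UNIV. x' $ m) = (\<Sum>m\<in>UNIV. x $ m)"
    by (simp add: coord sum.distrib sum_subtractf)
  moreover have "0 \<le> x' $ m \<and> x' $ m \<le> 1" for m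
    using assms(1) i j \<open>i \<noteq> j\<close>
    by (auto simp: coord t_def relfeas_def fractional_coords_def min_def)
  ultimately show "x' \<in> relfeas k"
    using assms(1) by (simp add: relfeas_def)
  have "fractional_coords x' \<subseteq> fractional_coords x"
    using i j by (auto simp: coord fractional_coords_def split: if_splits)
  moreover have "x' $ i = 1 \<or> x' $ j = 0"
    using \<open>i \<noteq> j\<close> by (auto simp: coord t_def min_def)
  then have "i \<notin> fractional_coords x' \<or> j \<notin> fractional_coords x'"
    by (auto simp: fractional_coords_def)
  then have "fractional_coords x' \<noteq> fractional_coords x"
    using i j by blast
  ultimately show "fractional_coords x' \<subset> fractional_coords x"
    by blast
qed

lemma relfeas_rounding:
  fixes f :: "real^'n \<Rightarrow> real"
  assumes convex: "\<And>x i j. i \<noteq> j \<Longrightarrow> convex_on UNIV (\<lambda>t. f (x + t *\<^sub>R (axis i 1 - axis j 1)))"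
    and "x \<in> relfeas k"
  shows "\<exists>x'\<in>binfeas k. f x \<le> f x'"
  using \<open>x \<in> relfeas k\<close>
proof (induction "card (fractional_coords x)" arbitrary: x rule: less_induct)
  case less
  show ?case
  proof (cases "fractional_coords x = {}")
    case True
    with less.prems show ?thesis
      by (auto simp: binfeas_iff_relfeas_no_fractional_coords)
  next
    case False
    then obtain i where i: "i \<in> fractional_coords x"
      by blast
    then obtain j where j: "j \<in> fractional_coords x" and "j \<noteq> i"
      using relfeas_fractional_coord_partner less.prems by blast
    define d :: "real^'n" where "d = axis i 1 - axis j 1"
    define t_up where "t_up = min (1 - x $ i) (x $ j)"
    define t_down where "t_down = min (1 - x $ j) (x $ i)"
    have swap: "x + t *\<^sub>R (axis j 1 - axis i 1) = x + (- t) *\<^sub>R d" for t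
      by (simp add: d_def algebra_simps)
    have exchange_ij: "0 < t_up" "x + t_up *\<^sub>R d \<in> relfeas k"
        "fractional_coords (x + t_up *\<^sub>R d) \<subset> fractional_coords x"
      using relfeas_exchange[OF less.prems i j] \<open>j \<noteq> i\<close> unfolding d_def t_up_def by auto
    have exchange_ji: "0 < t_down" "x + (- t_down) *\<^sub>R d \<in> relfeas k"
        "fractional_coords (x + (- t_down) *\<^sub>R d) \<subset> fractional_coords x"
      using relfeas_exchange[OF less.prems j i \<open>j \<noteq> i\<close>] unfolding t_down_def swap by auto
    obtain x_up where "x_up \<in> binfeas k" "f (x + t_up *\<^sub>R d) \<le> f x_up"
      using less.hyps[OF psubset_card_mono[OF finite exchange_ij(3)] exchange_ij(2)] by blast
    moreover obtain x_down where "x_down \<in> binfeas k" "f (x + (- t_down) *\<^sub>R d) \<le> f x_down"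
      using less.hyps[OF psubset_card_mono[OF finite exchange_ji(3)] exchange_ji(2)] by blast
    moreover have "f x \<le> max (f (x + (- t_down) *\<^sub>R d)) (f (x + t_up *\<^sub>R d))"
      using convex[of i j x] \<open>j \<noteq> i\<close> exchange_ij(1) exchange_ji(1)
      by (intro convex_on_line_le_max) (simp_all add: d_def)
    ultimately show ?thesis
      by (meson le_max_iff_disj order_trans)
  qed
qed

lemma finite_binfeas: "finite (binfeas k :: (real^'n) set)"
proof (rule finite_subset)
  show "binfeas k \<subseteq> range (\<lambda>S :: 'n set. \<chi> i. if i \<in> S then 1 else 0)"
  proof
    fix x :: "real^'n"
    assume "x \<in> binfeas k"
    then have "x = (\<chi> i. if i \<in> {i. x $ i = 1} then 1 else 0)"
      by (auto simp: binfeas_def vec_eq_iff)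
    then show "x \<in> range (\<lambda>S. \<chi> i. if i \<in> S then 1 else 0)"
      by blast
  qed
qed simp

lemma binfeas_nonempty:
  assumes "k \<le> CARD('n)"
  shows "binfeas k \<noteq> ({} :: (real^'n) set)"
proof -
  obtain S :: "'n set" where "card S = k"
    using obtain_subset_with_card_n[OF assms] by metis
  then have "(\<chi> i. if i \<in> S then 1 else 0) \<in> (binfeas k :: (real^'n) set)"
    by (simp add: binfeas_def sum.If_cases)
  then show ?thesis
    by blast
qed

lemma SUP_eq_Max_if_dominated:
  fixes f :: "'a \<Rightarrow> 'b::conditionally_complete_linorder"
  assumes "finite B" and "B \<noteq> {}" and "B \<subseteq> R" and dominated: "\<And>y. y \<in> R \<Longrightarrow> \<exists>x\<in>B. f y \<le> f x"
  shows "(SUP y\<in>R. f y) = (MAX x\<in>B. f x)"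
proof (rule cSup_eq_maximum)
  have "(MAX x\<in>B. f x) \<in> f ` B"
    using assms(1,2) by (intro Max_in) auto
  with \<open>B \<subseteq> R\<close> show "(MAX x\<in>B. f x) \<in> f ` R"
    by blast
  show "z \<le> (MAX x\<in>B. f x)" if "z \<in> f ` R" for z
    using that dominated \<open>finite B\<close> by (fastforce intro: Max_ge order_trans)
qed

theorem theorem1:
  fixes k :: nat and \<theta> lam :: real and c :: "real^'n" and E :: "real^'d^'n"
  assumes "1 \<le> k" and "k \<le> CARD('n)"
    and "0 \<le> \<theta>" and "\<theta> \<le> 1"
    and "\<And>i. norm (E $ i) = 1"
    and "lam \<ge> 2"
  shows "(MAX x\<in>binfeas k. obj \<theta> k lam c E x) = (SUP x\<in>relfeas k. obj \<theta> k lam c E x)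
    \<and> (\<exists>x\<in>binfeas k. \<forall>y\<in>relfeas k. obj \<theta> k lam c E y \<le> obj \<theta> k lam c E x)
    \<and> (\<forall>x\<in>binfeas k. (\<forall>y\<in>binfeas k. obj \<theta> k lam c E y \<le> obj \<theta> k lam c E x)
           \<longrightarrow> (\<forall>y\<in>relfeas k. obj \<theta> k lam c E y \<le> obj \<theta> k lam c E x))
    \<and> (\<forall>x\<in>relfeas k. \<exists>x'\<in>binfeas k. obj \<theta> k lam c E x \<le> obj \<theta> k lam c E x')"
proof -
  let ?f = "obj \<theta> k lam c E"
  have dominated: "\<forall>y\<in>relfeas k. \<exists>x\<in>binfeas k. ?f y \<le> ?f x"
    using relfeas_rounding[where f = ?f, OF obj_convex_on_exchange_line[OF assms(5,6,4)]] by blast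
  then have maximizers: "\<forall>x\<in>binfeas k. (\<forall>y\<in>binfeas k. ?f y \<le> ?f x) \<longrightarrow> (\<forall>y\<in>relfeas k. ?f y \<le> ?f x)"
    by (meson order_trans)
  have "(MAX x\<in>binfeas k. ?f x) \<in> ?f ` binfeas k"
    using finite_binfeas binfeas_nonempty[OF assms(2)] by (intro Max_in) auto
  then obtain x\<^sub>0 where "x\<^sub>0 \<in> binfeas k" and "?f x\<^sub>0 = (MAX x\<in>binfeas k. ?f x)"
    by (metis imageE)
  then have "\<forall>y\<in>binfeas k. ?f y \<le> ?f x\<^sub>0"
    using finite_binfeas by (auto intro!: Max_ge)
  with \<open>x\<^sub>0 \<in> binfeas k\<close> maximizers have "\<exists>x\<in>binfeas k. \<forall>y\<in>relfeas k. ?f y \<le> ?f x"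
    by blast
  moreover have "binfeas k \<subseteq> relfeas k"
    by (auto simp: binfeas_iff_relfeas_no_fractional_coords)
  then have "(MAX x\<in>binfeas k. ?f x) = (SUP y\<in>relfeas k. ?f y)"
    using dominated
    by (intro SUP_eq_Max_if_dominated[symmetric] finite_binfeas binfeas_nonempty[OF assms(2)]) auto
  ultimately show ?thesis
    using dominated maximizers by blast
qed

end
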